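(* Consider the perturbed federated algorithm described in the context, with $\beta\in(0,1)$. Assume that the bounded variance, bounded stochastic gradient norm and $L$-smoothness assumptions hold. Then for every client $i$, round $t\ge0$ and step $k\in\{0,\dots,E-1\}$, $$\mathbb{E}\|\overline{\mathbf{w}}_{t,k}-\widetilde{\mathbf{w}}^i_{t,k}\|^2\le4\gamma_t^2E^2G^2\Big[4+(1-\beta)^2+\mathbb{1}_{t\ge1}\frac{8\gamma_{t-1}^2}{\gamma_t^2}\Big(1-\frac1\beta\Big)^2\Big].$$
   Context: Setting: there are $C$ clients with local objectives $F_i:\mathbb{R}^D\to\mathbb{R}$. Similarity weights $p_{in}\ge0$ are symmetric, satisfy $p_{ii}=0$, and $\sum_{i,n}p_{in}=1$. Let $p_i=\sum_np_{in}>0$. Algorithm, with parameter $\beta$, $E\ge1$ local steps and step sizes $\gamma_t$, all clients participating: - $\mathbf{u}^i_0=\overline{\mathbf{w}}_{0,0}$. - In round $t$, $\mathbf{w}^i_{t,0}=\overline{\mathbf{w}}_{t,0}$. For $k=0,\dots,E-1$, $\widetilde{\mathbf{w}}^i_{t,k}=\beta\mathbf{w}^i_{t,k}+(1-\beta)\mathbf{u}^i_t$ and $\mathbf{w}^i_{t,k+1}=\mathbf{w}^i_{t,k}-\gamma_tg_i(\widetilde{\mathbf{w}}^i_{t,k})$, with stochastic gradients $g_i$ of $F_i$ sampled independently given the past. - $\overline{\mathbf{w}}_{t,k}=\sum_ip_i\mathbf{w}^i_{t,k}$ and $\overline{\mathbf{w}}_{t+1,0}=\overline{\mathbf{w}}_{t,E}$.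 - For $t\ge1$, $\mathbf{u}^i_t=\frac1{p_i}\sum_np_{in}\mathbf{w}^n_{t-1,E}$. Assumptions: - Unbiasedness: $\mathbb{E}\,g_i(\widetilde{\mathbf{w}}^i_{t,k})=\nabla F_i(\widetilde{\mathbf{w}}^i_{t,k})$. - Variance: $\mathbb{E}\|g_i(\widetilde{\mathbf{w}}^i_{t,k})-\nabla F_i(\widetilde{\mathbf{w}}^i_{t,k})\|^2\le\sigma^2$. - Bounded second moment: $\mathbb{E}\|g_i(\widetilde{\mathbf{w}}^i_{t,k})\|^2\le G^2$. - Each $\nabla F_i$ is $L$-Lipschitz. $\mathbb{E}$ is total expectation. *)

theory Defs
  imports "HOL-Probability.Probability"
begin

definition pw :: "nat \<Rightarrow> (nat \<Rightarrow> nat \<Rightarrow> real) \<Rightarrow> nat \<Rightarrow> real" where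
  "pw C p i = (\<Sum>n<C. p i n)"

text \<open>Local iterates within one round for one client:
  start point w (= wbar_{t,0}), anchor u (= u^i_t), step size gam,
  gradient oracle G k x (stochastic gradient at step k evaluated at x).
  loc ... k = w^i_{t,k}.\<close>

primrec loc :: "real \<Rightarrow> real \<Rightarrow> (nat \<Rightarrow> 'v::real_vector \<Rightarrow> 'v) \<Rightarrow> 'v \<Rightarrow> 'v \<Rightarrow> nat \<Rightarrow> 'v" where
  "loc \<beta> gam G u w 0 = w"
| "loc \<beta> gam G u w (Suc k) =
     loc \<beta> gam G u w k - gam *\<^sub>R G k (\<beta> *\<^sub>R loc \<beta> gam G u w k + (1 - \<beta>) *\<^sub>R u)"

text \<open>Round state (wbar_{t,0}, u_t) along a sample path omega.
  g i x s : stochastic gradient of client i at point x with sample s;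
  xi i t k omega : sample used by client i in round t, local step k.\<close>

primrec rnd :: "nat \<Rightarrow> (nat \<Rightarrow> nat \<Rightarrow> real) \<Rightarrow> real \<Rightarrow> nat \<Rightarrow> (nat \<Rightarrow> real)
    \<Rightarrow> (nat \<Rightarrow> 'v::real_vector \<Rightarrow> 's \<Rightarrow> 'v) \<Rightarrow> (nat \<Rightarrow> nat \<Rightarrow> nat \<Rightarrow> 'a \<Rightarrow> 's) \<Rightarrow> 'v \<Rightarrow> 'a
    \<Rightarrow> nat \<Rightarrow> 'v \<times> (nat \<Rightarrow> 'v)" where
  "rnd C p \<beta> E \<gamma> g \<xi> w0 \<omega> 0 = (w0, \<lambda>i. w0)"
| "rnd C p \<beta> E \<gamma> g \<xi> w0 \<omega> (Suc t) =
     (let st = rnd C p \<beta> E \<gamma> g \<xi> w0 \<omega> t;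
          e = (\<lambda>n. loc \<beta> (\<gamma> t) (\<lambda>k x. g n x (\<xi> n t k \<omega>)) (snd st n) (fst st) E)
      in ((\<Sum>n<C. pw C p n *\<^sub>R e n),
          (\<lambda>i. (1 / pw C p i) *\<^sub>R (\<Sum>n<C. p i n *\<^sub>R e n))))"

definition fed_w where
  "fed_w C p \<beta> E \<gamma> g \<xi> w0 i t k \<omega> =
     loc \<beta> (\<gamma> t) (\<lambda>k x. g i x (\<xi> i t k \<omega>)) (snd (rnd C p \<beta> E \<gamma> g \<xi> w0 \<omega> t) i)
         (fst (rnd C p \<beta> E \<gamma> g \<xi> w0 \<omega> t)) k"

definition fed_u where
  "fed_u C p \<beta> E \<gamma> g \<xi> w0 i t \<omega> = snd (rnd C p \<beta> E \<gamma> g \<xi> w0 \<omega> t) i"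

definition fed_wt where
  "fed_wt C p \<beta> E \<gamma> g \<xi> w0 i t k \<omega> =
     \<beta> *\<^sub>R fed_w C p \<beta> E \<gamma> g \<xi> w0 i t k \<omega> + (1 - \<beta>) *\<^sub>R fed_u C p \<beta> E \<gamma> g \<xi> w0 i t \<omega>"

definition fed_wbar where
  "fed_wbar C p \<beta> E \<gamma> g \<xi> w0 t k \<omega> =
     (\<Sum>i<C. pw C p i *\<^sub>R fed_w C p \<beta> E \<gamma> g \<xi> w0 i t k \<omega>)"

end

theory Submission
  imports Defs
begin

text \<open>Unrolling the local steps gives \<open>w(n,t,k) = wbar(t,0) - \<gamma>(t) D(n,t,k)\<close>, where
  \<open>D(n,t,k)\<close> is the sum of the first \<open>k\<close> stochastic gradients of client \<open>n\<close> in round \<open>t\<close>.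
  Hence \<open>wbar(t,k) - wt(i,t,k)\<close> is \<open>(1 - \<beta>) (wbar(t,0) - u(i,t))\<close>, minus \<open>\<gamma>(t)\<close> times the
  \<open>p\<close>-average of the \<open>D(n,t,k)\<close>, plus \<open>\<beta> \<gamma>(t) D(i,t,k)\<close>. For \<open>t \<ge> 1\<close> the consensus gap
  \<open>wbar(t,0) - u(i,t)\<close> is the combination of the \<open>w(n,t-1,E)\<close> with coefficients
  \<open>p\<^sub>n - p\<^sub>i\<^sub>n / p\<^sub>i\<close>; these sum to 0 and have absolute sum at most 2, so the common starting
  point cancels and the gap is \<open>-\<gamma>(t-1)\<close> times a combination of the \<open>D(n,t-1,E)\<close>.
  By Cauchy-Schwarz and the second-moment bound every \<open>D(n,t,J)\<close> has mean square at most
  \<open>J\<^sup>2 G\<^sup>2\<close>, and \<open>\<parallel>a + b + c\<parallel>\<^sup>2 \<le> 3 (\<parallel>a\<parallel>\<^sup>2 + \<parallel>b\<parallel>\<^sup>2 + \<parallel>c\<parallel>\<^sup>2)\<close> combines the three terms.\<close>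

lemma weighted_sum_power2_le:
  fixes c r :: "'i \<Rightarrow> real"
  assumes "\<And>n. n \<in> A \<Longrightarrow> 0 \<le> c n"
  shows "(\<Sum>n\<in>A. c n * r n)\<^sup>2 \<le> (\<Sum>n\<in>A. c n) * (\<Sum>n\<in>A. c n * (r n)\<^sup>2)"
proof -
  have "(\<Sum>n\<in>A. sqrt (c n) * (sqrt (c n) * r n))\<^sup>2
      \<le> (\<Sum>n\<in>A. (sqrt (c n))\<^sup>2) * (\<Sum>n\<in>A. (sqrt (c n) * r n)\<^sup>2)"
    by (rule Cauchy_Schwarz_ineq_sum)
  moreover have "(\<Sum>n\<in>A. sqrt (c n) * (sqrt (c n) * r n)) = (\<Sum>n\<in>A. c n * r n)"
    by (rule sum.cong) (use assms in \<open>auto simp: mult.assoc[symmetric]\<close>)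
  moreover have "(\<Sum>n\<in>A. (sqrt (c n))\<^sup>2) = (\<Sum>n\<in>A. c n)"
    by (rule sum.cong) (use assms in auto)
  moreover have "(\<Sum>n\<in>A. (sqrt (c n) * r n)\<^sup>2) = (\<Sum>n\<in>A. c n * (r n)\<^sup>2)"
    by (rule sum.cong) (use assms in \<open>auto simp: power_mult_distrib\<close>)
  ultimately show ?thesis by simp
qed

lemma norm_sum_scaleR_power2_le:
  fixes x :: "'i \<Rightarrow> 'v::real_normed_vector"
  shows "(norm (\<Sum>n\<in>A. c n *\<^sub>R x n))\<^sup>2 \<le> (\<Sum>n\<in>A. \<bar>c n\<bar>) * (\<Sum>n\<in>A. \<bar>c n\<bar> * (norm (x n))\<^sup>2)"
proof -
  have "norm (\<Sum>n\<in>A. c n *\<^sub>R x n) \<le> (\<Sum>n\<in>A. \<bar>c n\<bar> * norm (x n))"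
    using norm_sum[of "\<lambda>n. c n *\<^sub>R x n" A] by simp
  then have "(norm (\<Sum>n\<in>A. c n *\<^sub>R x n))\<^sup>2 \<le> (\<Sum>n\<in>A. \<bar>c n\<bar> * norm (x n))\<^sup>2"
    by (rule power_mono) simp
  also have "\<dots> \<le> (\<Sum>n\<in>A. \<bar>c n\<bar>) * (\<Sum>n\<in>A. \<bar>c n\<bar> * (norm (x n))\<^sup>2)"
    by (rule weighted_sum_power2_le) simp
  finally show ?thesis .
qed

lemma norm_add3_power2_le:
  fixes a b c :: "'v::real_normed_vector"
  shows "(norm (a + b + c))\<^sup>2 \<le> 3 * ((norm a)\<^sup>2 + (norm b)\<^sup>2 + (norm c)\<^sup>2)"
proof -
  have "norm (a + b + c) \<le> norm a + norm b + norm c"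
    using norm_triangle_ineq[of "a + b" c] norm_triangle_ineq[of a b] by linarith
  then have "(norm (a + b + c))\<^sup>2 \<le> (norm a + norm b + norm c)\<^sup>2"
    by (rule power_mono) simp
  also have "\<dots> \<le> 3 * ((norm a)\<^sup>2 + (norm b)\<^sup>2 + (norm c)\<^sup>2)"
  proof -
    have "0 \<le> (norm a - norm b)\<^sup>2 + (norm b - norm c)\<^sup>2 + (norm a - norm c)\<^sup>2" by simp
    then show ?thesis by (simp add: power2_eq_square algebra_simps)
  qed
  finally show ?thesis .
qed

lemma sum_scaleR_diff_right:
  fixes x :: "'v::real_vector"
  shows "(\<Sum>n\<in>A. c n *\<^sub>R (x - y n)) = (\<Sum>n\<in>A. c n) *\<^sub>R x - (\<Sum>n\<in>A. c n *\<^sub>R y n)"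
  by (simp add: algebra_simps sum_subtractf scaleR_sum_left)

lemma square_one_minus_le_square_one_minus_inverse:
  fixes \<beta> :: real
  assumes "0 < \<beta>" "\<beta> \<le> 1"
  shows "(1 - \<beta>)\<^sup>2 \<le> (1 - 1 / \<beta>)\<^sup>2"
proof -
  have "1 - \<beta> \<le> (1 - \<beta>) / \<beta>"
    using assms by (simp add: le_divide_eq mult_left_le)
  also have "\<dots> = 1 / \<beta> - 1"
    using assms by (simp add: field_simps)
  finally have "(1 - \<beta>)\<^sup>2 \<le> (1 / \<beta> - 1)\<^sup>2"
    by (rule power_mono) (use assms in simp)
  then show ?thesis by (simp add: power2_commute)
qed

lemma loc_eq_diff_sum:
  "loc \<beta> gam G u w k = w - gam *\<^sub>R (\<Sum>j<k. G j (\<beta> *\<^sub>R loc \<beta> gam G u w j + (1 - \<beta>) *\<^sub>R u))"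
  by (induction k) (simp_all add: algebra_simps)

text \<open>A mean-square bound is certified by an integrable majorant of \<open>\<parallel>f\<parallel>\<^sup>2\<close>, so no
  measurability of the iterates is ever needed: a non-integrable \<open>\<parallel>f\<parallel>\<^sup>2\<close> has Bochner
  integral 0, which the majorant bounds as well.\<close>

definition ms_bounded :: "'a measure \<Rightarrow> ('a \<Rightarrow> 'v::real_normed_vector) \<Rightarrow> real \<Rightarrow> bool" where
  "ms_bounded M f B \<longleftrightarrow>
     (\<exists>h. integrable M h \<and> (\<forall>x\<in>space M. (norm (f x))\<^sup>2 \<le> h x) \<and> integral\<^sup>L M h \<le> B)"

lemma ms_boundedI:
  assumes "integrable M (\<lambda>x. (norm (f x))\<^sup>2)" "integral\<^sup>L M (\<lambda>x. (norm (f x))\<^sup>2) \<le> B"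
  shows "ms_bounded M f B"
  using assms unfolding ms_bounded_def by blast

lemma ms_bounded_integral_le:
  assumes "ms_bounded M f B"
  shows "integral\<^sup>L M (\<lambda>x. (norm (f x))\<^sup>2) \<le> B"
proof -
  from assms obtain h where h: "integrable M h" "\<And>x. x \<in> space M \<Longrightarrow> (norm (f x))\<^sup>2 \<le> h x"
    and "integral\<^sup>L M h \<le> B"
    unfolding ms_bounded_def by blast
  have "integral\<^sup>L M (\<lambda>x. (norm (f x))\<^sup>2) \<le> integral\<^sup>L M h"
    by (rule integral_mono'[OF h]) (use h(2) zero_le_power2 order_trans in blast)+
  with \<open>integral\<^sup>L M h \<le> B\<close> show ?thesis by linarith
qed

lemma ms_bounded_mono: "ms_bounded M f A \<Longrightarrow> A \<le> B \<Longrightarrow> ms_bounded M f B"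
  unfolding ms_bounded_def by force

lemma ms_bounded_zero: "ms_bounded M (\<lambda>_. 0) 0"
  unfolding ms_bounded_def by (intro exI[of _ "\<lambda>_. 0"]) simp

lemma ms_bounded_scaleR:
  assumes "ms_bounded M f B"
  shows "ms_bounded M (\<lambda>x. c *\<^sub>R f x) (c\<^sup>2 * B)"
proof -
  from assms obtain h where "integrable M h" "\<forall>x\<in>space M. (norm (f x))\<^sup>2 \<le> h x"
    "integral\<^sup>L M h \<le> B"
    unfolding ms_bounded_def by blast
  then show ?thesis
    unfolding ms_bounded_def
    by (intro exI[of _ "\<lambda>x. c\<^sup>2 * h x"])
       (auto simp: power_mult_distrib intro: mult_left_mono)
qed

lemma ms_bounded_add3:
  assumes "ms_bounded M f A" "ms_bounded M g B" "ms_bounded M h C"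
  shows "ms_bounded M (\<lambda>x. f x + g x + h x) (3 * (A + B + C))"
proof -
  from assms obtain a b c
    where "integrable M a" "\<forall>x\<in>space M. (norm (f x))\<^sup>2 \<le> a x" "integral\<^sup>L M a \<le> A"
      and "integrable M b" "\<forall>x\<in>space M. (norm (g x))\<^sup>2 \<le> b x" "integral\<^sup>L M b \<le> B"
      and "integrable M c" "\<forall>x\<in>space M. (norm (h x))\<^sup>2 \<le> c x" "integral\<^sup>L M c \<le> C"
    unfolding ms_bounded_def by blast
  then show ?thesis
    unfolding ms_bounded_def
    by (intro exI[of _ "\<lambda>x. 3 * (a x + b x + c x)"])
       (fastforce intro: order_trans[OF norm_add3_power2_le])
qed

lemma ms_bounded_sum_scaleR:
  assumes "\<And>n. n \<in> I \<Longrightarrow> ms_bounded M (f n) (B n)"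
  shows "ms_bounded M (\<lambda>x. \<Sum>n\<in>I. c n *\<^sub>R f n x) ((\<Sum>n\<in>I. \<bar>c n\<bar>) * (\<Sum>n\<in>I. \<bar>c n\<bar> * B n))"
proof -
  from assms obtain h where h: "\<And>n. n \<in> I \<Longrightarrow> integrable M (h n)"
    "\<And>n x. n \<in> I \<Longrightarrow> x \<in> space M \<Longrightarrow> (norm (f n x))\<^sup>2 \<le> h n x"
    "\<And>n. n \<in> I \<Longrightarrow> integral\<^sup>L M (h n) \<le> B n"
    unfolding ms_bounded_def by metis
  define H where "H x = (\<Sum>n\<in>I. \<bar>c n\<bar>) * (\<Sum>n\<in>I. \<bar>c n\<bar> * h n x)" for x
  have "integrable M H"
    unfolding H_def using h(1) by auto
  moreover have "(norm (\<Sum>n\<in>I. c n *\<^sub>R f n x))\<^sup>2 \<le> H x" if "x \<in> space M" for x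
    unfolding H_def using h(2) that
    by (intro order_trans[OF norm_sum_scaleR_power2_le] mult_left_mono sum_mono)
       (auto intro: mult_left_mono sum_nonneg)
  moreover have "integral\<^sup>L M H \<le> (\<Sum>n\<in>I. \<bar>c n\<bar>) * (\<Sum>n\<in>I. \<bar>c n\<bar> * B n)"
    unfolding H_def using h(1,3)
    by (auto intro!: mult_left_mono sum_mono sum_nonneg simp: integral_sum)
  ultimately show ?thesis
    unfolding ms_bounded_def by blast
qed

locale fed_run =
  fixes C E :: nat and p :: "nat \<Rightarrow> nat \<Rightarrow> real" and \<beta> :: real and \<gamma> :: "nat \<Rightarrow> real"
    and g :: "nat \<Rightarrow> 'v::real_normed_vector \<Rightarrow> 's \<Rightarrow> 'v" and \<xi> :: "nat \<Rightarrow> nat \<Rightarrow> nat \<Rightarrow> 'a \<Rightarrow> 's"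
    and w0 :: 'v
  assumes p_nonneg: "\<And>i n. 0 \<le> p i n"
    and pw_sum: "(\<Sum>n<C. pw C p n) = 1"
    and pw_pos: "\<And>i. i < C \<Longrightarrow> 0 < pw C p i"
begin

abbreviation "w \<equiv> fed_w C p \<beta> E \<gamma> g \<xi> w0"
abbreviation "u \<equiv> fed_u C p \<beta> E \<gamma> g \<xi> w0"
abbreviation "wt \<equiv> fed_wt C p \<beta> E \<gamma> g \<xi> w0"
abbreviation "wbar \<equiv> fed_wbar C p \<beta> E \<gamma> g \<xi> w0"
abbreviation "wstart t \<omega> \<equiv> fst (rnd C p \<beta> E \<gamma> g \<xi> w0 \<omega> t)"
abbreviation "grad n t j \<omega> \<equiv> g n (wt n t j \<omega>) (\<xi> n t j \<omega>)"
abbreviation "drift n t k \<omega> \<equiv> \<Sum>j<k. grad n t j \<omega>"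

lemma sum_abs_pw: "(\<Sum>n<C. \<bar>pw C p n\<bar>) = 1"
  using pw_pos by (simp add: pw_sum less_imp_le)

lemma sum_p_div_pw: "i < C \<Longrightarrow> (\<Sum>n<C. p i n / pw C p i) = 1"
  using pw_pos[of i] by (simp add: pw_def flip: sum_divide_distrib)

lemma sum_abs_gap_weights_le: "i < C \<Longrightarrow> (\<Sum>n<C. \<bar>pw C p n - p i n / pw C p i\<bar>) \<le> 2"
proof -
  assume "i < C"
  have "(\<Sum>n<C. \<bar>pw C p n - p i n / pw C p i\<bar>) \<le> (\<Sum>n<C. pw C p n + p i n / pw C p i)"
    using p_nonneg pw_pos[OF \<open>i < C\<close>]
    by (intro sum_mono order_trans[OF abs_triangle_ineq4]) (simp add: pw_def sum_nonneg)
  also have "\<dots> = 2"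
    using sum_p_div_pw[OF \<open>i < C\<close>] by (simp add: sum.distrib pw_sum)
  finally show ?thesis .
qed

lemma w_eq: "w n t k \<omega> = wstart t \<omega> - \<gamma> t *\<^sub>R drift n t k \<omega>"
  unfolding fed_w_def by (subst loc_eq_diff_sum) (simp add: fed_wt_def fed_w_def fed_u_def)

lemma wbar_eq: "wbar t k \<omega> = wstart t \<omega> - \<gamma> t *\<^sub>R (\<Sum>n<C. pw C p n *\<^sub>R drift n t k \<omega>)"
  by (simp add: fed_wbar_def w_eq sum_scaleR_diff_right pw_sum scaleR_sum_right mult.commute)

lemma wbar_minus_wt:
  "wbar t k \<omega> - wt i t k \<omega> =
     (1 - \<beta>) *\<^sub>R (wstart t \<omega> - u i t \<omega>) + (- \<gamma> t) *\<^sub>R (\<Sum>n<C. pw C p n *\<^sub>R drift n t k \<omega>)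
       + (\<beta> * \<gamma> t) *\<^sub>R drift i t k \<omega>"
proof -
  have "(a - c *\<^sub>R x) - (\<beta> *\<^sub>R (a - c *\<^sub>R y) + (1 - \<beta>) *\<^sub>R b)
      = (1 - \<beta>) *\<^sub>R (a - b) + (- c) *\<^sub>R x + (\<beta> * c) *\<^sub>R y" for a b x y :: 'v and c
    by (simp add: algebra_simps)
  \<comment> \<open>only instances may be unfolded: the drift terms contain the perturbed iterates again\<close>
  then show ?thesis
    unfolding wbar_eq fed_wt_def[of C p \<beta> E \<gamma> g \<xi> w0 i t k \<omega>] w_eq[of i t k \<omega>] .
qed

lemma wstart_0_minus_u: "wstart 0 \<omega> - u i 0 \<omega> = 0"
  by (simp add: fed_u_def)

lemma wstart_Suc_minus_u:
  assumes "i < C"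
  shows "wstart (Suc t) \<omega> - u i (Suc t) \<omega>
           = (- \<gamma> t) *\<^sub>R (\<Sum>n<C. (pw C p n - p i n / pw C p i) *\<^sub>R drift n t E \<omega>)"
proof -
  define d where "d n = pw C p n - p i n / pw C p i" for n
  have d_sum: "(\<Sum>n<C. d n) = 0"
    using sum_p_div_pw[OF assms] by (simp add: d_def sum_subtractf pw_sum)
  have "wstart (Suc t) \<omega> = (\<Sum>n<C. pw C p n *\<^sub>R w n t E \<omega>)"
    by (simp add: fed_w_def fed_u_def Let_def)
  moreover have "u i (Suc t) \<omega> = (\<Sum>n<C. (p i n / pw C p i) *\<^sub>R w n t E \<omega>)"
    by (simp add: fed_w_def fed_u_def Let_def scaleR_sum_right)
  ultimately have "wstart (Suc t) \<omega> - u i (Suc t) \<omega> = (\<Sum>n<C. d n *\<^sub>R w n t E \<omega>)"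
    by (simp add: d_def scaleR_diff_left sum_subtractf)
  also have "\<dots> = (\<Sum>n<C. d n) *\<^sub>R wstart t \<omega> - (\<Sum>n<C. d n *\<^sub>R \<gamma> t *\<^sub>R drift n t E \<omega>)"
    by (simp only: w_eq sum_scaleR_diff_right)
  also have "\<dots> = (- \<gamma> t) *\<^sub>R (\<Sum>n<C. d n *\<^sub>R drift n t E \<omega>)"
    by (simp add: d_sum scaleR_sum_right mult.commute sum_negf)
  finally show ?thesis
    unfolding d_def .
qed

end

locale fed_run_bounded = fed_run +
  fixes M and G :: real
  assumes second_moment: "\<And>n t j. n < C \<Longrightarrow> j < E \<Longrightarrow>
    integrable M (\<lambda>\<omega>. (norm (g n (fed_wt C p \<beta> E \<gamma> g \<xi> w0 n t j \<omega>) (\<xi> n t j \<omega>)))\<^sup>2) \<and>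
    integral\<^sup>L M (\<lambda>\<omega>. (norm (g n (fed_wt C p \<beta> E \<gamma> g \<xi> w0 n t j \<omega>) (\<xi> n t j \<omega>)))\<^sup>2) \<le> G\<^sup>2"
begin

lemma ms_bounded_drift:
  assumes "n < C" "J \<le> E"
  shows "ms_bounded M (drift n t J) ((real J)\<^sup>2 * G\<^sup>2)"
proof -
  have "ms_bounded M (\<lambda>\<omega>. \<Sum>j<J. 1 *\<^sub>R grad n t j \<omega>) ((\<Sum>j<J. \<bar>1\<bar>) * (\<Sum>j<J. \<bar>1\<bar> * G\<^sup>2))"
    using assms second_moment by (intro ms_bounded_sum_scaleR ms_boundedI) auto
  then show ?thesis
    by (simp add: power2_eq_square mult.assoc)
qed

lemma ms_bounded_drift_combination:
  assumes "J \<le> E"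
  shows "ms_bounded M (\<lambda>\<omega>. \<Sum>n<C. c n *\<^sub>R drift n t J \<omega>) ((\<Sum>n<C. \<bar>c n\<bar>)\<^sup>2 * ((real J)\<^sup>2 * G\<^sup>2))"
proof -
  have "ms_bounded M (\<lambda>\<omega>. \<Sum>n<C. c n *\<^sub>R drift n t J \<omega>)
          ((\<Sum>n<C. \<bar>c n\<bar>) * (\<Sum>n<C. \<bar>c n\<bar> * ((real J)\<^sup>2 * G\<^sup>2)))"
    using assms by (intro ms_bounded_sum_scaleR) (auto intro: ms_bounded_drift)
  then show ?thesis
    by (simp add: power2_eq_square sum_distrib_right mult.assoc)
qed

lemma ms_bounded_consensus_gap:
  assumes "i < C"
  shows "ms_bounded M (\<lambda>\<omega>. wstart t \<omega> - u i t \<omega>)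
           (if 1 \<le> t then 4 * (\<gamma> (t - 1))\<^sup>2 * ((real E)\<^sup>2 * G\<^sup>2) else 0)"
proof (cases t)
  case 0
  then show ?thesis
    unfolding 0 wstart_0_minus_u by (simp add: ms_bounded_zero)
next
  case (Suc s)
  have "(\<Sum>n<C. \<bar>pw C p n - p i n / pw C p i\<bar>)\<^sup>2 \<le> 2\<^sup>2"
    using sum_abs_gap_weights_le[OF assms] by (rule power_mono) (simp add: sum_nonneg)
  then have "(\<Sum>n<C. \<bar>pw C p n - p i n / pw C p i\<bar>)\<^sup>2 * ((\<gamma> s)\<^sup>2 * ((real E)\<^sup>2 * G\<^sup>2))
      \<le> 2\<^sup>2 * ((\<gamma> s)\<^sup>2 * ((real E)\<^sup>2 * G\<^sup>2))"
    by (rule mult_right_mono) simp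
  then show ?thesis
    unfolding Suc wstart_Suc_minus_u[OF assms]
    by (intro ms_bounded_mono[OF ms_bounded_scaleR[OF ms_bounded_drift_combination]]) (auto simp: mult_ac)
qed

lemma ms_bounded_wbar_minus_wt:
  assumes "i < C" "k \<le> E"
  shows "ms_bounded M (\<lambda>\<omega>. wbar t k \<omega> - wt i t k \<omega>)
           (3 * ((1 - \<beta>)\<^sup>2 * (if 1 \<le> t then 4 * (\<gamma> (t - 1))\<^sup>2 * ((real E)\<^sup>2 * G\<^sup>2) else 0)
                 + (\<gamma> t)\<^sup>2 * ((real k)\<^sup>2 * G\<^sup>2) + (\<beta> * \<gamma> t)\<^sup>2 * ((real k)\<^sup>2 * G\<^sup>2)))"
proof -
  have avg: "ms_bounded M (\<lambda>\<omega>. (- \<gamma> t) *\<^sub>R (\<Sum>n<C. pw C p n *\<^sub>R drift n t k \<omega>))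
              ((\<gamma> t)\<^sup>2 * ((real k)\<^sup>2 * G\<^sup>2))"
    using ms_bounded_scaleR[OF ms_bounded_drift_combination[OF assms(2), of "pw C p" t], of "- \<gamma> t"]
    by (simp add: sum_abs_pw)
  show ?thesis
    unfolding wbar_minus_wt
    by (rule ms_bounded_add3[OF ms_bounded_scaleR[OF ms_bounded_consensus_gap[OF assms(1)]] avg
          ms_bounded_scaleR[OF ms_bounded_drift[OF assms]]])
qed

end

lemma consensus_bound_arith:
  fixes \<beta> a b e k G :: real
  assumes "0 < \<beta>" "\<beta> < 1" "0 < a" "0 \<le> k" "k \<le> e"
  shows "3 * ((1 - \<beta>)\<^sup>2 * (if P then 4 * b\<^sup>2 * (e\<^sup>2 * G\<^sup>2) else 0)
              + a\<^sup>2 * (k\<^sup>2 * G\<^sup>2) + (\<beta> * a)\<^sup>2 * (k\<^sup>2 * G\<^sup>2))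
         \<le> 4 * a\<^sup>2 * e\<^sup>2 * G\<^sup>2 * (4 + (1 - \<beta>)\<^sup>2 + (if P then 8 * b\<^sup>2 / a\<^sup>2 * (1 - 1 / \<beta>)\<^sup>2 else 0))"
proof -
  have "k\<^sup>2 * G\<^sup>2 \<le> e\<^sup>2 * G\<^sup>2"
    using assms by (intro mult_right_mono power_mono) auto
  then have kG: "a\<^sup>2 * (k\<^sup>2 * G\<^sup>2) \<le> a\<^sup>2 * (e\<^sup>2 * G\<^sup>2)"
    by (rule mult_left_mono) simp
  have "\<beta>\<^sup>2 \<le> 1"
    using assms by (simp add: power_le_one)
  then have "\<beta>\<^sup>2 * (a\<^sup>2 * (k\<^sup>2 * G\<^sup>2)) \<le> 1 * (a\<^sup>2 * (e\<^sup>2 * G\<^sup>2))"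
    using kG by (rule mult_mono) auto
  with kG have "a\<^sup>2 * (k\<^sup>2 * G\<^sup>2) + (\<beta> * a)\<^sup>2 * (k\<^sup>2 * G\<^sup>2) \<le> 2 * (a\<^sup>2 * (e\<^sup>2 * G\<^sup>2))"
    by (simp add: power_mult_distrib mult.assoc)
  moreover have "(1 - \<beta>)\<^sup>2 * (if P then 4 * b\<^sup>2 * (e\<^sup>2 * G\<^sup>2) else 0)
      \<le> (if P then 4 * b\<^sup>2 * (e\<^sup>2 * G\<^sup>2) * (1 - 1 / \<beta>)\<^sup>2 else 0)"
    using square_one_minus_le_square_one_minus_inverse[of \<beta>] assms
    by (auto simp: mult.commute intro: mult_right_mono)
  moreover have "0 \<le> (if P then 4 * b\<^sup>2 * (e\<^sup>2 * G\<^sup>2) * (1 - 1 / \<beta>)\<^sup>2 else 0)"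
    by simp
  moreover have "4 * a\<^sup>2 * e\<^sup>2 * G\<^sup>2 * (4 + (1 - \<beta>)\<^sup>2 + (if P then 8 * b\<^sup>2 / a\<^sup>2 * (1 - 1 / \<beta>)\<^sup>2 else 0))
      = 16 * (a\<^sup>2 * (e\<^sup>2 * G\<^sup>2)) + 4 * a\<^sup>2 * e\<^sup>2 * G\<^sup>2 * (1 - \<beta>)\<^sup>2
        + 8 * (if P then 4 * b\<^sup>2 * (e\<^sup>2 * G\<^sup>2) * (1 - 1 / \<beta>)\<^sup>2 else 0)"
    using assms by (simp add: field_simps)
  moreover have "0 \<le> 4 * a\<^sup>2 * e\<^sup>2 * G\<^sup>2 * (1 - \<beta>)\<^sup>2" "0 \<le> a\<^sup>2 * (e\<^sup>2 * G\<^sup>2)"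
    by simp_all
  ultimately show ?thesis
    by argo
qed

theorem lemma7:
  fixes M :: "'a measure" and S :: "'s measure"
    and C E :: nat and p :: "nat \<Rightarrow> nat \<Rightarrow> real"
    and \<beta> L \<sigma> G :: real and \<gamma> :: "nat \<Rightarrow> real"
    and F :: "nat \<Rightarrow> 'v::euclidean_space \<Rightarrow> real" and gradF :: "nat \<Rightarrow> 'v \<Rightarrow> 'v"
    and g :: "nat \<Rightarrow> 'v \<Rightarrow> 's \<Rightarrow> 'v" and \<xi> :: "nat \<Rightarrow> nat \<Rightarrow> nat \<Rightarrow> 'a \<Rightarrow> 's"
    and w0 :: 'v
  assumes M: "prob_space M"
    and beta: "0 < \<beta>" "\<beta> < 1"
    and E: "E \<ge> 1"
    and step: "\<And>t. \<gamma> t > 0"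
    and p_nonneg: "\<And>i n. p i n \<ge> 0"
    and p_sym: "\<And>i n. p i n = p n i"
    and p_diag: "\<And>i. p i i = 0"
    and p_sum: "(\<Sum>i<C. \<Sum>n<C. p i n) = 1"
    and p_pos: "\<And>i. i < C \<Longrightarrow> pw C p i > 0"
    and xi_rv: "\<And>i t k. \<xi> i t k \<in> measurable M S"
    and xi_indep: "prob_space.indep_vars M (\<lambda>_. S) (\<lambda>(i, t, k). \<xi> i t k)
                     ({..<C} \<times> UNIV \<times> {..<E})"
    and g_meas: "\<And>i. (\<lambda>(x, s). g i x s) \<in> borel_measurable (borel \<Otimes>\<^sub>M S)"
    and F_grad: "\<And>i x. (F i has_derivative (\<lambda>h. gradF i x \<bullet> h)) (at x)"
    and L_smooth: "\<And>i x y. norm (gradF i x - gradF i y) \<le> L * norm (x - y)"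
    and unbiased: "\<And>i t k x. i < C \<Longrightarrow> k < E \<Longrightarrow>
        integrable M (\<lambda>\<omega>. g i x (\<xi> i t k \<omega>)) \<and>
        integral\<^sup>L M (\<lambda>\<omega>. g i x (\<xi> i t k \<omega>)) = gradF i x"
    and variance: "\<And>i t k. i < C \<Longrightarrow> k < E \<Longrightarrow>
        integrable M (\<lambda>\<omega>. (norm (g i (fed_wt C p \<beta> E \<gamma> g \<xi> w0 i t k \<omega>) (\<xi> i t k \<omega>)
                                  - gradF i (fed_wt C p \<beta> E \<gamma> g \<xi> w0 i t k \<omega>)))\<^sup>2) \<and>
        integral\<^sup>L M (\<lambda>\<omega>. (norm (g i (fed_wt C p \<beta> E \<gamma> g \<xi> w0 i t k \<omega>) (\<xi> i t k \<omega>)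
                                  - gradF i (fed_wt C p \<beta> E \<gamma> g \<xi> w0 i t k \<omega>)))\<^sup>2) \<le> \<sigma>\<^sup>2"
    and second_moment: "\<And>i t k. i < C \<Longrightarrow> k < E \<Longrightarrow>
        integrable M (\<lambda>\<omega>. (norm (g i (fed_wt C p \<beta> E \<gamma> g \<xi> w0 i t k \<omega>) (\<xi> i t k \<omega>)))\<^sup>2) \<and>
        integral\<^sup>L M (\<lambda>\<omega>. (norm (g i (fed_wt C p \<beta> E \<gamma> g \<xi> w0 i t k \<omega>) (\<xi> i t k \<omega>)))\<^sup>2) \<le> G\<^sup>2"
    and i: "i < C" and k: "k < E"
  shows "integral\<^sup>L M (\<lambda>\<omega>. (norm (fed_wbar C p \<beta> E \<gamma> g \<xi> w0 t k \<omega>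
                                   - fed_wt C p \<beta> E \<gamma> g \<xi> w0 i t k \<omega>))\<^sup>2)
         \<le> 4 * (\<gamma> t)\<^sup>2 * (real E)\<^sup>2 * G\<^sup>2 *
            (4 + (1 - \<beta>)\<^sup>2 +
             (if t \<ge> 1 then 8 * (\<gamma> (t - 1))\<^sup>2 / (\<gamma> t)\<^sup>2 * (1 - 1 / \<beta>)\<^sup>2 else 0))"
proof -
  interpret fed_run_bounded C E p \<beta> \<gamma> g \<xi> w0 M G
  proof unfold_locales
    show "(\<Sum>n<C. pw C p n) = 1"
      using p_sum by (simp add: pw_def)
  qed (fact p_nonneg p_pos second_moment)+
  have "integral\<^sup>L M (\<lambda>\<omega>. (norm (wbar t k \<omega> - wt i t k \<omega>))\<^sup>2)
      \<le> 3 * ((1 - \<beta>)\<^sup>2 * (if 1 \<le> t then 4 * (\<gamma> (t - 1))\<^sup>2 * ((real E)\<^sup>2 * G\<^sup>2) else 0)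
             + (\<gamma> t)\<^sup>2 * ((real k)\<^sup>2 * G\<^sup>2) + (\<beta> * \<gamma> t)\<^sup>2 * ((real k)\<^sup>2 * G\<^sup>2))"
    using i k by (intro ms_bounded_integral_le ms_bounded_wbar_minus_wt) auto
  also have "\<dots> \<le> 4 * (\<gamma> t)\<^sup>2 * (real E)\<^sup>2 * G\<^sup>2 *
            (4 + (1 - \<beta>)\<^sup>2 +
             (if t \<ge> 1 then 8 * (\<gamma> (t - 1))\<^sup>2 / (\<gamma> t)\<^sup>2 * (1 - 1 / \<beta>)\<^sup>2 else 0))"
    using beta step[of t] k by (intro consensus_bound_arith) auto
  finally show ?thesis .
qed

end
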